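(* Let $p\in[1,\infty)$, $w$ a weight sequence, and let $A\subset L_{p,w}$ be such that for every $\varepsilon>0$ there is $n\in\mathbb{N}$ with $\|a\|_{p,w}^p-S_n(a)<\varepsilon$ for all $a\in A$; for $\varepsilon>0$ let $n(\varepsilon)$ denote the least such $n$. If there exists $m\in\mathbb{N}$ such that $n(\varepsilon)\le m$ for all $\varepsilon>0$, then $A-A=\{a-b:a,b\in A\}$ is equinormed with respect to $\{\|\cdot\|_{p,w,i}\}_{i\in\mathbb{N}}$.
   Context: A weight sequence is a sequence $w=(w_i)$ of positive reals with $w_1=1\ge w_2\ge\dots$, $w_i\to0$, and $\sum_i w_i=+\infty$. For a real sequence $a$, $\|a\|_{p,w}=\sup_{\sigma}\big(\sum_{i=1}^\infty |a_{\sigma_i}|^p w_i\big)^{1/p}$ over all permutations $\sigma$ of $\mathbb{N}$, and $L_{p,w}$ is the set of real sequences with finite $\|\cdot\|_{p,w}$. For $i\in\mathbb{N}$, $\|a\|_{p,w,i}=\|(a_1,\dots,a_i,0,0,\dots)\|_{p,w}$ and $S_i(a)=\|a\|_{p,w,i}^p$. A set $B\subset L_{p,w}$ is equinormed if $\forall\varepsilon>0\ \exists i\ \forall x\in B:\ \|x\|_{p,w}\le\|x\|_{p,w,i}+\varepsilon$. *)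

theory Defs
  imports "HOL-Analysis.Analysis"
begin

text \<open>Sequences are functions nat => real, indexed from 0 (entry k corresponds to the
paper's entry k+1).\<close>

definition weight_seq :: "(nat \<Rightarrow> real) \<Rightarrow> bool" where
  "weight_seq w \<longleftrightarrow> w 0 = 1 \<and> (\<forall>i. w i > 0) \<and> decseq w \<and> w \<longlonglongrightarrow> 0
     \<and> \<not> summable w"

definition lw_pow :: "real \<Rightarrow> (nat \<Rightarrow> real) \<Rightarrow> (nat \<Rightarrow> real) \<Rightarrow> ennreal" where
  "lw_pow p w a = (SUP \<sigma>\<in>{\<sigma>::nat\<Rightarrow>nat. bij \<sigma>}. (\<Sum>i. ennreal (\<bar>a (\<sigma> i)\<bar> powr p * w i)))"

definition Lpw :: "real \<Rightarrow> (nat \<Rightarrow> real) \<Rightarrow> (nat \<Rightarrow> real) set" where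
  "Lpw p w = {a. lw_pow p w a < \<infinity>}"

definition lw_norm :: "real \<Rightarrow> (nat \<Rightarrow> real) \<Rightarrow> (nat \<Rightarrow> real) \<Rightarrow> real" where
  "lw_norm p w a = enn2real (lw_pow p w a) powr (1 / p)"

definition trunc_seq :: "nat \<Rightarrow> (nat \<Rightarrow> real) \<Rightarrow> (nat \<Rightarrow> real)" where
  "trunc_seq i a = (\<lambda>k. if k < i then a k else 0)"

definition lw_norm_i :: "real \<Rightarrow> (nat \<Rightarrow> real) \<Rightarrow> nat \<Rightarrow> (nat \<Rightarrow> real) \<Rightarrow> real" where
  "lw_norm_i p w i a = lw_norm p w (trunc_seq i a)"

definition S_i :: "real \<Rightarrow> (nat \<Rightarrow> real) \<Rightarrow> nat \<Rightarrow> (nat \<Rightarrow> real) \<Rightarrow> real" where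
  "S_i p w i a = lw_norm_i p w i a powr p"

definition equinormed :: "real \<Rightarrow> (nat \<Rightarrow> real) \<Rightarrow> (nat \<Rightarrow> real) set \<Rightarrow> bool" where
  "equinormed p w B \<longleftrightarrow>
     (\<forall>\<epsilon>>0. \<exists>i. \<forall>x\<in>B. lw_norm p w x \<le> lw_norm_i p w i x + \<epsilon>)"

end

theory Submission
  imports Defs "HOL-Combinatorics.Transposition"
begin

text \<open>
If the least admissible index \<open>n(\<epsilon>)\<close> stays below \<open>m\<close>, then \<open>\<parallel>a\<parallel>\<^sup>p \<le> S\<^sub>m(a)\<close> for every \<open>a \<in> A\<close>.
An entry \<open>a\<^sub>k \<noteq> 0\<close> with \<open>k \<ge> m\<close> would contradict this: any rearrangement of the truncation
leaves one of the slots \<open>0, \<dots>, m\<close> empty, and putting \<open>a\<^sub>k\<close> there gains at least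
\<open>|a\<^sub>k|\<^sup>p w\<^sub>m > 0\<close>. So all of \<open>A\<close>, hence \<open>A - A\<close>, is supported in the first \<open>m\<close> entries, where
\<open>\<parallel>\<cdot>\<parallel> = \<parallel>\<cdot>\<parallel>\<^sub>m\<close>.
\<close>

lemma lw_pow_mono:
  assumes "p > 0" and "\<And>k. \<bar>a k\<bar> \<le> \<bar>b k\<bar>" and "\<And>i. w i \<ge> 0"
  shows "lw_pow p w a \<le> lw_pow p w b"
  unfolding lw_pow_def
proof (rule SUP_mono)
  fix \<sigma> :: "nat \<Rightarrow> nat" assume "\<sigma> \<in> {\<sigma>. bij \<sigma>}"
  then show "\<exists>\<tau>\<in>{\<sigma>. bij \<sigma>}. (\<Sum>i. ennreal (\<bar>a (\<sigma> i)\<bar> powr p * w i))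
      \<le> (\<Sum>i. ennreal (\<bar>b (\<tau> i)\<bar> powr p * w i))"
    using assms by (intro bexI[of _ \<sigma>] suminf_le) (auto intro!: ennreal_leI mult_right_mono powr_mono2)
qed

lemma lw_pow_trunc_mono:
  assumes "p > 0" and "\<And>i. w i \<ge> 0" and "n \<le> n'"
  shows "lw_pow p w (trunc_seq n a) \<le> lw_pow p w (trunc_seq n' a)"
  using assms by (intro lw_pow_mono) (auto simp: trunc_seq_def)

lemma lw_pow_trunc_le:
  assumes "p > 0" and "\<And>i. w i \<ge> 0"
  shows "lw_pow p w (trunc_seq n a) \<le> lw_pow p w a"
  using assms by (intro lw_pow_mono) (auto simp: trunc_seq_def)

lemma lw_norm_powr:
  assumes "p > 0"
  shows "lw_norm p w a powr p = enn2real (lw_pow p w a)"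
  using assms by (cases "enn2real (lw_pow p w a) = 0") (auto simp: lw_norm_def powr_powr)

lemma S_i_eq_lw_pow_trunc:
  assumes "p > 0"
  shows "S_i p w n a = enn2real (lw_pow p w (trunc_seq n a))"
  unfolding S_i_def lw_norm_i_def using assms by (rule lw_norm_powr)

lemma S_i_mono:
  assumes "p > 0" and "\<And>i. w i \<ge> 0" and "lw_pow p w a < \<infinity>" and "n \<le> n'"
  shows "S_i p w n a \<le> S_i p w n' a"
proof -
  have "lw_pow p w (trunc_seq n' a) < \<infinity>"
    using lw_pow_trunc_le[of p w, OF assms(1,2)] assms(3) by (rule le_less_trans)
  then show ?thesis
    unfolding S_i_eq_lw_pow_trunc[OF assms(1)] using assms by (intro enn2real_mono lw_pow_trunc_mono) auto
qed

lemma lw_norm_powr_le_S_i_iff: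
  assumes "p > 0" and "\<And>i. w i \<ge> 0" and "lw_pow p w a < \<infinity>"
  shows "lw_norm p w a powr p \<le> S_i p w m a \<longleftrightarrow> lw_pow p w a \<le> lw_pow p w (trunc_seq m a)"
proof -
  have "lw_pow p w (trunc_seq m a) < \<infinity>"
    using lw_pow_trunc_le[of p w, OF assms(1,2)] assms(3) by (rule le_less_trans)
  with assms(3) show ?thesis
    unfolding lw_norm_powr[OF assms(1)] S_i_eq_lw_pow_trunc[OF assms(1)]
    by (metis enn2real_mono ennreal_enn2real ennreal_leI infinity_ennreal_def)
qed

text \<open>Pigeonhole: at most \<open>m\<close> positions are sent into \<open>{..<m}\<close>, so one of \<open>0, \<dots>, m\<close> is free.\<close>
lemma bij_move_to_free_slot:
  fixes \<sigma> :: "nat \<Rightarrow> nat"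
  assumes "bij \<sigma>" and "m \<le> k"
  obtains \<sigma>' q where "bij \<sigma>'" and "q \<le> m" and "q \<notin> \<sigma> -` {..<m}" and "\<sigma>' q = k"
    and "\<And>i. i \<in> \<sigma> -` {..<m} \<Longrightarrow> \<sigma>' i = \<sigma> i"
proof -
  let ?I = "\<sigma> -` {..<m}"
  have "inj \<sigma>" using assms(1) by (rule bij_is_inj)
  then have "finite ?I" and "card ?I \<le> m"
    using card_inj_on_le[of \<sigma> ?I "{..<m}"] by (auto intro: finite_vimageI inj_on_subset)
  then have "\<not> {..m} \<subseteq> ?I"
    using card_mono[of ?I "{..m}"] by auto
  then obtain q where q: "q \<le> m" "q \<notin> ?I" by auto
  define j where "j = inv \<sigma> k"
  have \<sigma>j: "\<sigma> j = k" unfolding j_def using assms(1) by (simp add: bij_is_surj surj_f_inv_f)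
  then have "j \<notin> ?I" using assms(2) by auto
  let ?\<sigma>' = "\<sigma> \<circ> Transposition.transpose q j"
  have "bij ?\<sigma>'" using assms(1) by (intro bij_comp) auto
  moreover have "?\<sigma>' i = \<sigma> i" if "i \<in> ?I" for i
    using that q \<open>j \<notin> ?I\<close> by (auto simp: Transposition.transpose_def)
  ultimately show thesis using that q \<sigma>j by simp
qed

lemma lw_pow_trunc_add_tail_le:
  assumes "decseq w" and "m \<le> k"
  shows "lw_pow p w (trunc_seq m a) + ennreal (\<bar>a k\<bar> powr p * w m) \<le> lw_pow p w a"
proof -
  let ?t = "\<lambda>\<sigma> i. ennreal (\<bar>trunc_seq m a (\<sigma> i)\<bar> powr p * w i)"
  let ?s = "\<lambda>\<sigma> i. ennreal (\<bar>a (\<sigma> i)\<bar> powr p * w i)"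
  have "suminf (?t \<sigma>) + ennreal (\<bar>a k\<bar> powr p * w m) \<le> lw_pow p w a" if "bij \<sigma>" for \<sigma>
  proof -
    let ?I = "\<sigma> -` {..<m}"
    obtain \<sigma>' q where \<sigma>': "bij \<sigma>'" "q \<le> m" "q \<notin> ?I" "\<sigma>' q = k"
      and agree: "\<And>i. i \<in> ?I \<Longrightarrow> \<sigma>' i = \<sigma> i"
      using bij_move_to_free_slot[OF \<open>bij \<sigma>\<close> assms(2)] by blast
    have "finite ?I" using \<open>bij \<sigma>\<close> by (intro finite_vimageI) (auto dest: bij_is_inj)
    have "suminf (?t \<sigma>) = sum (?t \<sigma>) ?I"
      by (rule suminf_finite[OF \<open>finite ?I\<close>]) (auto simp: trunc_seq_def)
    also have "\<dots> = sum (?s \<sigma>') ?I"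
      by (rule sum.cong) (auto simp: trunc_seq_def agree)
    finally have "suminf (?t \<sigma>) + ennreal (\<bar>a k\<bar> powr p * w m) \<le> sum (?s \<sigma>') ?I + ?s \<sigma>' q"
      using assms(1) \<sigma>' by (auto intro!: add_left_mono ennreal_leI mult_left_mono simp: decseq_def)
    also have "\<dots> = sum (?s \<sigma>') (insert q ?I)"
      using \<open>finite ?I\<close> \<sigma>'(3) by (simp add: add.commute)
    also have "\<dots> \<le> suminf (?s \<sigma>')"
      using \<open>finite ?I\<close> by (intro sum_le_suminf) auto
    also have "\<dots> \<le> lw_pow p w a"
      unfolding lw_pow_def using \<sigma>'(1) by (intro SUP_upper) auto
    finally show ?thesis .
  qed
  then show ?thesis
    unfolding lw_pow_def[of p w "trunc_seq m a"]
    by (subst ennreal_SUP_add_left[symmetric]) (auto intro!: SUP_least)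
qed

lemma lw_pow_le_trunc_imp_zero:
  assumes "p > 0" and "\<And>i. w i > 0" and "decseq w" and "lw_pow p w a < \<infinity>"
    and "lw_pow p w a \<le> lw_pow p w (trunc_seq m a)" and "m \<le> k"
  shows "a k = 0"
proof (rule ccontr)
  assume "a k \<noteq> 0"
  let ?T = "lw_pow p w (trunc_seq m a)"
  have "?T < \<infinity>"
    using lw_pow_trunc_le[OF assms(1)] assms(2,4) by (meson less_imp_le le_less_trans)
  have "?T + ennreal (\<bar>a k\<bar> powr p * w m) \<le> lw_pow p w a"
    using assms(3,6) by (rule lw_pow_trunc_add_tail_le)
  also have "\<dots> \<le> ?T + 0"
    using assms(5) by simp
  finally have "ennreal (\<bar>a k\<bar> powr p * w m) \<le> 0"
    using \<open>?T < \<infinity>\<close> by (subst (asm) ennreal_add_left_cancel_le) (auto simp: top.not_eq_extremum)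
  then show False using \<open>a k \<noteq> 0\<close> assms(2)[of m] by simp
qed

lemma le_of_bounded_Least_approx_index:
  fixes f :: "'a \<Rightarrow> real" and g :: "nat \<Rightarrow> 'a \<Rightarrow> real"
  assumes approx: "\<forall>\<epsilon>>0. \<exists>n. \<forall>a\<in>A. f a - g n a < \<epsilon>"
    and bounded: "\<forall>\<epsilon>>0. (LEAST n. \<forall>a\<in>A. f a - g n a < \<epsilon>) \<le> m"
    and "a \<in> A" and mono: "\<And>n n'. n \<le> n' \<Longrightarrow> g n a \<le> g n' a"
  shows "f a \<le> g m a"
proof (rule field_le_epsilon)
  fix \<epsilon> :: real assume "\<epsilon> > 0"
  let ?P = "\<lambda>n. \<forall>a\<in>A. f a - g n a < \<epsilon>"
  have "\<exists>n. ?P n" using approx \<open>\<epsilon> > 0\<close> by blast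
  then have "?P (LEAST n. ?P n)" by (rule LeastI_ex)
  then have "f a - g (LEAST n. ?P n) a < \<epsilon>" using \<open>a \<in> A\<close> by blast
  moreover have "(LEAST n. ?P n) \<le> m" using bounded \<open>\<epsilon> > 0\<close> by blast
  then have "g (LEAST n. ?P n) a \<le> g m a" by (rule mono)
  ultimately show "f a \<le> g m a + \<epsilon>" by linarith
qed

lemma equinormed_if_supported:
  assumes "\<And>x k. x \<in> B \<Longrightarrow> m \<le> k \<Longrightarrow> x k = 0"
  shows "equinormed p w B"
proof -
  have "trunc_seq m x = x" if "x \<in> B" for x
    using assms[OF that] by (auto simp: trunc_seq_def)
  then show ?thesis
    unfolding equinormed_def lw_norm_i_def by (intro allI impI exI[of _ m] ballI) simp
qed

theorem mainTheorem8:
  fixes p :: real and w :: "nat \<Rightarrow> real" and A :: "(nat \<Rightarrow> real) set"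
  assumes "1 \<le> p"
    and "weight_seq w"
    and "A \<subseteq> Lpw p w"
    and "\<forall>\<epsilon>>0. \<exists>n. \<forall>a\<in>A. lw_norm p w a powr p - S_i p w n a < \<epsilon>"
    and "\<exists>m. \<forall>\<epsilon>>0. (LEAST n. \<forall>a\<in>A. lw_norm p w a powr p - S_i p w n a < \<epsilon>) \<le> m"
  shows "equinormed p w {a - b | a b. a \<in> A \<and> b \<in> A}"
proof -
  have "p > 0" using assms(1) by simp
  have wpos: "\<And>i. w i > 0" and "decseq w" using assms(2) by (auto simp: weight_seq_def)
  then have wnonneg: "\<And>i. w i \<ge> 0" by (simp add: less_imp_le)
  obtain m where m: "\<forall>\<epsilon>>0. (LEAST n. \<forall>a\<in>A. lw_norm p w a powr p - S_i p w n a < \<epsilon>) \<le> m"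
    using assms(5) by blast
  have supported: "a k = 0" if "a \<in> A" and "m \<le> k" for a k
  proof -
    have fin: "lw_pow p w a < \<infinity>" using that assms(3) by (auto simp: Lpw_def)
    have "lw_norm p w a powr p \<le> S_i p w m a"
      using assms(4) m \<open>a \<in> A\<close> S_i_mono[OF \<open>p > 0\<close> wnonneg fin]
      by (rule le_of_bounded_Least_approx_index[where f = "\<lambda>a. lw_norm p w a powr p" and g = "S_i p w"])
    then have "lw_pow p w a \<le> lw_pow p w (trunc_seq m a)"
      using lw_norm_powr_le_S_i_iff[OF \<open>p > 0\<close> wnonneg fin] by blast
    with \<open>p > 0\<close> wpos \<open>decseq w\<close> fin show ?thesis
      using \<open>m \<le> k\<close> by (rule lw_pow_le_trunc_imp_zero)
  qed
  show ?thesis by (rule equinormed_if_supported[of _ m]) (auto simp: supported)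
qed

end
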